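(* Let $\pi$ be a partition in $\mathbb{C}(3,3)$ having at least one odd part. Then there exists a unique integer $m\ge0$ such that $\pi\in\mathbb{C}_{=}(3,3|m)$.
   Context: A partition $\pi=(\pi_1,\dots,\pi_\ell)$ is a finite non-increasing sequence of positive integers; "$a$ occurs in $\pi$" means $a=\pi_i$ for some $i$. Göllnitz–Gordon marking: $GG(\pi)$ assigns a positive integer (mark) to each part, processing the parts from smallest to largest; $\pi_i$ receives the smallest positive integer different from the marks of all parts $\pi_g$ with $g>i$ and $\pi_i-\pi_g\le 2$, where $\pi_i-\pi_g<2$ is required when $\pi_i$ is odd. An "$r$-marked part $a$" is a part equal to $a$ with mark $r$. $N_i(\pi)$ is the number of parts with mark $i$; $\pi^{(i)}_1\ge\dots\ge\pi^{(i)}_{N_i(\pi)}$ are the parts with mark $i$, with $\pi^{(i)}_0=+\infty$, $\pi^{(i)}_{N_i(\pi)+1}=-\infty$. $\mathbb{C}(k,r)$: partitions with (i) no odd part repeated; (ii) $\pi_i\ge\pi_{i+k-1}+2$ for $1\le i\le\ell-k+1$, strict if $\pi_i$ even; (iii) at most $r-1$ parts $\le 2$. Starting types: for $\pi\in\mathbb{C}(k,r)$ with $N_2=N_2(\pi)\ge1$, let $l$ be the largest integer in $\{0,\dots,N_2\}$ such that no odd part of $\pi$ is $\ge\pi^{(2)}_l$; for $l<i\le N_2$, $\pi^{(2)}_i$ has type $s_{-1}$. For $b=1,\dots,l$ in increasing order, type and auxiliary $\sigma_b$: for $b=1$: Case 1: 1-marked part $\pi^{(2)}_1-1$ exists and $\pi^{(2)}_1+2$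 does not occur: type $s_0$, $\sigma_1=\pi^{(2)}_1-1$; Case 2: 1-marked $\pi^{(2)}_1-2$ exists and $\pi^{(2)}_1+2$ does not occur: type $s_1$, $\sigma_1=\pi^{(2)}_1-2$; Case 3: 1-marked $\pi^{(2)}_1+2$ exists: type $s_2$, $\sigma_1=\pi^{(2)}_1+2$; Case 4: 1-marked $\pi^{(2)}_1$ exists: type $s_3$, $\sigma_1=\pi^{(2)}_1$. For $2\le b\le l$: Case 1: 1-marked $\pi^{(2)}_b-1$ exists and, if a 1-marked $\pi^{(2)}_b+2$ exists, $\sigma_{b-1}=\pi^{(2)}_b+2$: type $s_0$, $\sigma_b=\pi^{(2)}_b-1$; Case 2: same with $\pi^{(2)}_b-2$: type $s_1$, $\sigma_b=\pi^{(2)}_b-2$; Case 3: 1-marked $\pi^{(2)}_b+2$ exists and $\sigma_{b-1}\ne\pi^{(2)}_b+2$: type $s_2$, $\sigma_b=\pi^{(2)}_b+2$; Case 4: 1-marked $\pi^{(2)}_b$ exists: type $s_3$, $\sigma_b=\pi^{(2)}_b$. $\mathbb{C}_{=}(k,r|p,t)$ (for $p,t\ge0$): the set of $\pi\in\mathbb{C}(k,r)$ such that (1) the largest odd part of $\pi$ is $2t+1$; (2) the mark of $2t+1$ in $GG(\pi)$ is at most $2$; (3) $\pi^{(2)}_p\ge 2t+2$ and $\pi^{(2)}_{p+1}\le 2t+2$; (4) if there is a 2-marked part $2t+2$ of starting type $s_0$, then $\pi^{(2)}_{p+1}=2t+2$ and there exists $1\le i\le p+1$ with $\pi^{(2)}_i=\pi^{(2)}_{p+1}+4(p-i+1)$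 and $\pi^{(2)}_i$ occurring exactly once in $\pi$; (5) if there is a 2-marked part $2t+2$ of starting type $s_2$, then $\pi^{(2)}_p=2t+2$; (6) if $2t+2$ occurs in $\pi$ and there is no 2-marked part $2t+2$, then $\pi^{(2)}_p=2t+4$, it is of starting type $s_3$, and there exists $1\le i\le p$ with $\pi^{(2)}_i=\pi^{(2)}_p+4(p-i)$ such that $\pi^{(2)}_i+2$ does not occur in $\pi$. For $m\ge 0$, $\mathbb{C}_{=}(k,r|m)=\bigcup_{p,t\ge0,\ p+t=m}\mathbb{C}_{=}(k,r|p,t)$. *)

theory Defs
  imports Main "HOL-Library.Extended_Real"
begin

text \<open>A partition is a finite non-increasing list of positive integers;
  list index j (0-based) corresponds to the part \<pi>_{j+1}.\<close>

definition is_partition :: "nat list \<Rightarrow> bool" where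
  "is_partition \<pi> \<longleftrightarrow> sorted_wrt (\<ge>) \<pi> \<and> (\<forall>x\<in>set \<pi>. 0 < x)"

text \<open>Goellnitz-Gordon marking, computed from the smallest part (end of the list)
  to the largest.  gg \<pi> ! j is the mark of the part \<pi> ! j.\<close>

fun gg :: "nat list \<Rightarrow> nat list" where
  "gg [] = []"
| "gg (x # xs) =
     (let ms = gg xs;
          bad = {ms ! g | g. g < length xs \<and> int x - int (xs ! g) \<le> 2 \<and>
                              (odd x \<longrightarrow> int x - int (xs ! g) < 2)}
      in (LEAST m. 0 < m \<and> m \<notin> bad) # ms)"

definition marked_parts :: "nat list \<Rightarrow> nat \<Rightarrow> nat list" where
  "marked_parts \<pi> i = [\<pi> ! j. j \<leftarrow> [0..<length \<pi>], gg \<pi> ! j = i]"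

definition Nmark :: "nat list \<Rightarrow> nat \<Rightarrow> nat" where
  "Nmark \<pi> i = length (marked_parts \<pi> i)"

text \<open>\<pi>^(i)_j with the conventions \<pi>^(i)_0 = +\<infinity> and \<pi>^(i)_j = -\<infinity> for j > N_i.\<close>
definition pm :: "nat list \<Rightarrow> nat \<Rightarrow> nat \<Rightarrow> ereal" where
  "pm \<pi> i j = (if j = 0 then \<infinity>
               else if j \<le> Nmark \<pi> i then ereal (real (marked_parts \<pi> i ! (j - 1)))
               else -\<infinity>)"

text \<open>\<pi>^(2)_b as a natural number, meaningful for 1 \<le> b \<le> N_2.\<close>
definition P2 :: "nat list \<Rightarrow> nat \<Rightarrow> nat" where
  "P2 \<pi> b = marked_parts \<pi> 2 ! (b - 1)"

definition one_marked :: "nat list \<Rightarrow> nat \<Rightarrow> bool" where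
  "one_marked \<pi> a \<longleftrightarrow> (\<exists>j<length \<pi>. \<pi> ! j = a \<and> gg \<pi> ! j = 1)"

definition two_marked :: "nat list \<Rightarrow> nat \<Rightarrow> bool" where
  "two_marked \<pi> a \<longleftrightarrow> (\<exists>j<length \<pi>. \<pi> ! j = a \<and> gg \<pi> ! j = 2)"

definition inC :: "nat \<Rightarrow> nat \<Rightarrow> nat list \<Rightarrow> bool" where
  "inC k r \<pi> \<longleftrightarrow>
     (\<forall>i j. i < length \<pi> \<and> j < length \<pi> \<and> i \<noteq> j \<and> odd (\<pi> ! i) \<longrightarrow> \<pi> ! i \<noteq> \<pi> ! j) \<and>
     (\<forall>i. i + k - 1 < length \<pi> \<longrightarrow>
          \<pi> ! i \<ge> \<pi> ! (i + k - 1) + 2 \<and>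
          (even (\<pi> ! i) \<longrightarrow> \<pi> ! i > \<pi> ! (i + k - 1) + 2)) \<and>
     length (filter (\<lambda>x. x \<le> 2) \<pi>) \<le> r - 1"

text \<open>Starting types.  SNone is a default never reached when one of the four cases applies.\<close>
datatype stype = Sm1 | S0 | S1 | S2 | S3 | SNone

text \<open>sdata \<pi> b = (type of \<pi>^(2)_b, \<sigma>_b) computed by the case rules, for b \<ge> 1.\<close>
fun sdata :: "nat list \<Rightarrow> nat \<Rightarrow> stype \<times> nat option" where
  "sdata \<pi> 0 = (SNone, None)"
| "sdata \<pi> (Suc b) =
     (let x = P2 \<pi> (Suc b) in
      if b = 0 then
        (if one_marked \<pi> (x - 1) \<and> x + 2 \<notin> set \<pi> then (S0, Some (x - 1))
         else if one_marked \<pi> (x - 2) \<and> x + 2 \<notin> set \<pi> then (S1, Some (x - 2))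
         else if one_marked \<pi> (x + 2) then (S2, Some (x + 2))
         else if one_marked \<pi> x then (S3, Some x)
         else (SNone, None))
      else
        (let \<sigma> = snd (sdata \<pi> b) in
         if one_marked \<pi> (x - 1) \<and> (one_marked \<pi> (x + 2) \<longrightarrow> \<sigma> = Some (x + 2))
           then (S0, Some (x - 1))
         else if one_marked \<pi> (x - 2) \<and> (one_marked \<pi> (x + 2) \<longrightarrow> \<sigma> = Some (x + 2))
           then (S1, Some (x - 2))
         else if one_marked \<pi> (x + 2) \<and> \<sigma> \<noteq> Some (x + 2) then (S2, Some (x + 2))
         else if one_marked \<pi> x then (S3, Some x)
         else (SNone, None)))"

definition lval :: "nat list \<Rightarrow> nat" where
  "lval \<pi> = (GREATEST l. l \<le> Nmark \<pi> 2 \<and>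
                (\<forall>y\<in>set \<pi>. odd y \<longrightarrow> ereal (real y) < pm \<pi> 2 l))"

definition start_type :: "nat list \<Rightarrow> nat \<Rightarrow> stype" where
  "start_type \<pi> b = (if b \<le> lval \<pi> then fst (sdata \<pi> b) else Sm1)"

definition has_2marked_of_type :: "nat list \<Rightarrow> nat \<Rightarrow> stype \<Rightarrow> bool" where
  "has_2marked_of_type \<pi> a s \<longleftrightarrow>
     (\<exists>b. 1 \<le> b \<and> b \<le> Nmark \<pi> 2 \<and> P2 \<pi> b = a \<and> start_type \<pi> b = s)"

definition inCeq_pt :: "nat \<Rightarrow> nat \<Rightarrow> nat \<Rightarrow> nat \<Rightarrow> nat list \<Rightarrow> bool" where
  "inCeq_pt k r p t \<pi> \<longleftrightarrow>
     inC k r \<pi> \<and>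
     \<comment> \<open>(1)\<close>
     (2*t+1 \<in> set \<pi> \<and> (\<forall>y\<in>set \<pi>. odd y \<longrightarrow> y \<le> 2*t+1)) \<and>
     \<comment> \<open>(2)\<close>
     (\<forall>j<length \<pi>. \<pi> ! j = 2*t+1 \<longrightarrow> gg \<pi> ! j \<le> 2) \<and>
     \<comment> \<open>(3)\<close>
     pm \<pi> 2 p \<ge> ereal (real (2*t+2)) \<and> pm \<pi> 2 (p+1) \<le> ereal (real (2*t+2)) \<and>
     \<comment> \<open>(4)\<close>
     (has_2marked_of_type \<pi> (2*t+2) S0 \<longrightarrow>
        pm \<pi> 2 (p+1) = ereal (real (2*t+2)) \<and>
        (\<exists>i. 1 \<le> i \<and> i \<le> p+1 \<and>
             pm \<pi> 2 i = pm \<pi> 2 (p+1) + ereal (real (4*(p+1-i))) \<and>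
             (\<exists>x. pm \<pi> 2 i = ereal (real x) \<and> count_list \<pi> x = 1))) \<and>
     \<comment> \<open>(5)\<close>
     (has_2marked_of_type \<pi> (2*t+2) S2 \<longrightarrow> pm \<pi> 2 p = ereal (real (2*t+2))) \<and>
     \<comment> \<open>(6)\<close>
     (2*t+2 \<in> set \<pi> \<and> \<not> two_marked \<pi> (2*t+2) \<longrightarrow>
        pm \<pi> 2 p = ereal (real (2*t+4)) \<and> start_type \<pi> p = S3 \<and>
        (\<exists>i. 1 \<le> i \<and> i \<le> p \<and>
             pm \<pi> 2 i = pm \<pi> 2 p + ereal (real (4*(p-i))) \<and>
             (\<exists>x. pm \<pi> 2 i = ereal (real x) \<and> x + 2 \<notin> set \<pi>)))"

definition inCeq :: "nat \<Rightarrow> nat \<Rightarrow> nat \<Rightarrow> nat list \<Rightarrow> bool" where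
  "inCeq k r m \<pi> \<longleftrightarrow> (\<exists>p t. p + t = m \<and> inCeq_pt k r p t \<pi>)"

end

theory Submission
  imports Defs
begin

(* For partitions in C(3,r) the Goellnitz-Gordon marking only uses the marks 1 and 2: a part
   gets mark 2 exactly when the next smaller part is within GG distance and has mark 1.
   Consequently the 2-marked parts are strictly decreasing.  Condition (1) forces 2t+1 to be
   the largest odd part, and condition (3) then pins p down to the position of 2t+2 among the
   2-marked parts, with one ambiguity left when 2t+2 is itself 2-marked.  In that case 2t+2
   sits directly above the 1-marked part 2t+1, so its starting type is s_0 or s_2, and exactly
   one of the conditions (4) and (5) can be met. *)

lemma Least_pos_notin_subset_singleton:
  assumes "B \<subseteq> {c}"
  shows "(LEAST m::nat. 0 < m \<and> m \<notin> B) = (if 1 \<in> B then 2 else 1)"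
  using assms by (auto simp: subset_singleton_iff intro!: Least_equality)

lemma count_list_eq_1_if_unique_nth:
  assumes "i < length xs" "xs ! i = x" "\<And>j. j < length xs \<Longrightarrow> xs ! j = x \<Longrightarrow> j = i"
  shows "count_list xs x = 1"
proof -
  have "{j. j < length xs \<and> x = xs ! j} = {i}"
    using assms by blast
  then show ?thesis
    by (simp add: count_list_eq_length_filter length_filter_conv_card)
qed

lemma sorted_desc_nth_less_imp_less:
  fixes xs :: "'a::linorder list"
  assumes "sorted_wrt (\<ge>) xs" "i < length xs" "j < length xs" "xs ! i < xs ! j"
  shows "j < i"
  using sorted_wrt_nth_less[OF assms(1), of i j] assms(2-4)
  by (cases i j rule: linorder_cases) auto

lemma is_partition_sorted: "is_partition xs \<Longrightarrow> sorted_wrt (\<ge>) xs"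
  unfolding is_partition_def by simp

definition gap3 :: "nat list \<Rightarrow> bool" where
  "gap3 xs \<longleftrightarrow> (\<forall>i. i + 2 < length xs \<longrightarrow>
     xs ! (i + 2) + 2 \<le> xs ! i \<and> (even (xs ! i) \<longrightarrow> xs ! (i + 2) + 2 < xs ! i))"

lemma inC_3_imp_gap3: "inC 3 r xs \<Longrightarrow> gap3 xs"
  unfolding inC_def gap3_def by (auto simp: numeral_eq_Suc)

lemma gap3_ConsD: "gap3 (x # xs) \<Longrightarrow> gap3 xs"
  unfolding gap3_def by (metis Suc_less_eq add_Suc length_Cons nth_Cons_Suc)

lemma gap3_nth_le:
  assumes "sorted_wrt (\<ge>) xs" "gap3 xs" "i + 2 \<le> j" "j < length xs"
  shows "xs ! j + 2 \<le> xs ! i" "even (xs ! i) \<Longrightarrow> xs ! j + 2 < xs ! i"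
proof -
  have "xs ! j \<le> xs ! (i + 2)"
    using sorted_wrt_nth_less[OF assms(1), of "i + 2" j] assms(3,4) by (cases "j = i + 2") auto
  moreover have "xs ! (i + 2) + 2 \<le> xs ! i" "even (xs ! i) \<Longrightarrow> xs ! (i + 2) + 2 < xs ! i"
    using assms(2-4) unfolding gap3_def by auto
  ultimately show "xs ! j + 2 \<le> xs ! i" "even (xs ! i) \<Longrightarrow> xs ! j + 2 < xs ! i"
    by auto
qed

definition gg_close :: "nat \<Rightarrow> nat \<Rightarrow> bool" where
  "gg_close x y \<longleftrightarrow> int x - int y \<le> 2 \<and> (odd x \<longrightarrow> int x - int y < 2)"

lemma gg_Cons_nth_Suc [simp]: "gg (x # xs) ! Suc j = gg xs ! j"
  by (simp add: Let_def)

lemma sorted_gap3_not_gg_close: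
  assumes "sorted_wrt (\<ge>) (x # xs)" "gap3 (x # xs)" "1 \<le> g" "g < length xs"
  shows "\<not> gg_close x (xs ! g)"
  using gap3_nth_le[OF assms(1,2), of 0 "Suc g"] assms(3,4) unfolding gg_close_def by auto

(* Under the gap condition only the next smaller part can lie within GG distance. *)
lemma gg_nth:
  assumes "sorted_wrt (\<ge>) xs" "gap3 xs" "j < length xs"
  shows "gg xs ! j =
    (if Suc j < length xs \<and> gg_close (xs ! j) (xs ! Suc j) \<and> gg xs ! Suc j = 1 then 2 else 1)"
  using assms
proof (induction xs arbitrary: j)
  case Nil
  then show ?case by simp
next
  case (Cons x xs)
  show ?case
  proof (cases j)
    case (Suc j')
    then show ?thesis
      using Cons.IH[of j'] Cons.prems gap3_ConsD by (simp del: gg.simps)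
  next
    case 0
    define bad where "bad = {gg xs ! g | g. g < length xs \<and> int x - int (xs ! g) \<le> 2 \<and>
                                        (odd x \<longrightarrow> int x - int (xs ! g) < 2)}"
    have only_first_close: "g = 0" if "g < length xs" "gg_close x (xs ! g)" for g
      using sorted_gap3_not_gg_close[OF Cons.prems(1,2), of g] that by (cases g) auto
    have "bad \<subseteq> {gg xs ! 0}"
      unfolding bad_def gg_close_def[symmetric] using only_first_close by blast
    have first_one: "1 \<in> bad \<longleftrightarrow> xs \<noteq> [] \<and> gg_close x (xs ! 0) \<and> gg xs ! 0 = 1"
      unfolding bad_def gg_close_def[symmetric] by (auto intro!: exI[of _ 0] dest: only_first_close)
    have "gg (x # xs) ! 0 = (LEAST m. 0 < m \<and> m \<notin> bad)"
      by (simp add: bad_def Let_def)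
    also have "\<dots> = (if 1 \<in> bad then 2 else 1)"
      by (rule Least_pos_notin_subset_singleton) fact
    also have "\<dots> = (if xs \<noteq> [] \<and> gg_close x (xs ! 0) \<and> gg xs ! 0 = 1 then 2 else 1)"
      by (simp only: first_one)
    finally show ?thesis
      using 0 by (simp del: gg.simps)
  qed
qed

lemma gg_nth_le_2:
  assumes "sorted_wrt (\<ge>) xs" "gap3 xs" "j < length xs"
  shows "gg xs ! j \<le> 2"
  using gg_nth[OF assms] by simp

lemma gg_nth_Suc_eq_1_if_eq_2:
  assumes "sorted_wrt (\<ge>) xs" "gap3 xs" "j < length xs" "gg xs ! j = 2"
  shows "gg xs ! Suc j = 1"
  using gg_nth[OF assms(1-3)] assms(4) by (simp split: if_splits)

lemma gap3_even_close_imp_Suc: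
  assumes "sorted_wrt (\<ge>) xs" "gap3 xs" "i < j" "j < length xs"
    and "even (xs ! i)" "xs ! i \<le> xs ! j + 2"
  shows "j = Suc i"
  using gap3_nth_le(2)[OF assms(1,2), of i j] assms(3-6) by fastforce

lemma gg_odd_below_successor:
  assumes "sorted_wrt (\<ge>) xs" "gap3 xs" "Suc j < length xs"
    and "odd (xs ! Suc j)" "xs ! j = xs ! Suc j + 1"
  shows "gg xs ! Suc j = 1" "gg xs ! j = 2"
proof -
  have "\<not> gg_close (xs ! Suc j) (xs ! Suc (Suc j))" if "Suc (Suc j) < length xs"
    using gap3_nth_le(2)[OF assms(1,2), of j "Suc (Suc j)"] that assms(4,5)
    unfolding gg_close_def by auto
  then show "gg xs ! Suc j = 1"
    using gg_nth[OF assms(1-3)] by auto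
  then show "gg xs ! j = 2"
    using gg_nth[OF assms(1,2), of j] assms(3,5) unfolding gg_close_def by simp
qed

lemma marked_parts_conv_filter:
  "marked_parts xs i = map ((!) xs) (filter (\<lambda>j. gg xs ! j = i) [0..<length xs])"
proof -
  have "concat (map (\<lambda>j. if P j then [f j] else []) js) = map f (filter P js)"
    for P and f :: "nat \<Rightarrow> nat" and js
    by (induction js) auto
  then show ?thesis
    unfolding marked_parts_def by simp
qed

lemma set_marked_parts_two: "set (marked_parts xs 2) = {a. two_marked xs a}"
  unfolding marked_parts_conv_filter two_marked_def by auto

lemma two_marked_nth_less:
  assumes "sorted_wrt (\<ge>) xs" "gap3 xs" "j < j'" "j' < length xs"
    and "gg xs ! j = 2" "gg xs ! j' = 2"
  shows "xs ! j' < xs ! j"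
proof -
  have "j' \<noteq> Suc j"
    using gg_nth_Suc_eq_1_if_eq_2[OF assms(1,2) _ assms(5)] assms(3,4,6) by auto
  then show ?thesis
    using gap3_nth_le(1)[OF assms(1,2), of j j'] assms(3,4) by simp
qed

lemma sorted_marked_parts_two:
  assumes "sorted_wrt (\<ge>) xs" "gap3 xs"
  shows "sorted_wrt (>) (marked_parts xs 2)"
  unfolding marked_parts_conv_filter
proof (rule sorted_wrt_map_mono)
  show "sorted_wrt (<) (filter (\<lambda>j. gg xs ! j = 2) [0..<length xs])"
    by (rule sorted_wrt_filter) (rule sorted_wrt_upt)
qed (use two_marked_nth_less[OF assms] in auto)

lemma pm_gt_Nmark: "Nmark xs i < b \<Longrightarrow> pm xs i b = -\<infinity>"
  unfolding pm_def by auto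

lemma pm_eq_ereal_D: "pm xs i b = ereal x \<Longrightarrow> 1 \<le> b \<and> b \<le> Nmark xs i"
  unfolding pm_def by (auto split: if_splits)

lemma pm_two_eq_P2: "1 \<le> b \<Longrightarrow> b \<le> Nmark xs 2 \<Longrightarrow> pm xs 2 b = ereal (real (P2 xs b))"
  unfolding pm_def P2_def by simp

lemma P2_in_set:
  assumes "1 \<le> b" "b \<le> Nmark xs 2"
  shows "P2 xs b \<in> set xs"
proof -
  have "P2 xs b \<in> set (marked_parts xs 2)"
    using assms unfolding P2_def Nmark_def by simp
  then show ?thesis
    unfolding set_marked_parts_two two_marked_def by (auto dest: sym)
qed

lemma pm_strict_antimono:
  assumes "sorted_wrt (>) (marked_parts xs i)" "b < b'" "b' \<le> Nmark xs i + 1"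
  shows "pm xs i b' < pm xs i b"
proof (cases "b' = Nmark xs i + 1 \<or> b = 0")
  case True
  then show ?thesis
    using assms(2,3) unfolding pm_def by auto
next
  case False
  then have "marked_parts xs i ! (b' - 1) < marked_parts xs i ! (b - 1)"
    using sorted_wrt_nth_less[OF assms(1), of "b - 1" "b' - 1"] assms(2,3)
    unfolding Nmark_def by fastforce
  then show ?thesis
    using False assms(2,3) unfolding pm_def by auto
qed

lemma pm_antimono:
  assumes "sorted_wrt (>) (marked_parts xs i)" "b \<le> b'"
  shows "pm xs i b' \<le> pm xs i b"
  using pm_strict_antimono[OF assms(1), of b b'] pm_gt_Nmark[of xs i b'] assms(2)
  by (cases "b = b'"; cases "b' \<le> Nmark xs i + 1") auto

lemma pm_inj:
  assumes "sorted_wrt (>) (marked_parts xs i)" "pm xs i b = pm xs i b'"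
    "b \<le> Nmark xs i" "b' \<le> Nmark xs i"
  shows "b = b'"
  using pm_strict_antimono[OF assms(1), of b b'] pm_strict_antimono[OF assms(1), of b' b] assms(2-4)
  by (cases b b' rule: linorder_cases) auto

lemma ex_pm_bracket: "\<exists>p. pm xs i (p + 1) \<le> ereal x \<and> ereal x < pm xs i p"
proof -
  define p where "p = (LEAST p. pm xs i (p + 1) \<le> ereal x)"
  have "pm xs i (Nmark xs i + 1) \<le> ereal x"
    using pm_gt_Nmark[of xs i] by simp
  then have "pm xs i (p + 1) \<le> ereal x"
    unfolding p_def by (rule LeastI)
  moreover have "ereal x < pm xs i p"
  proof (cases p)
    case 0
    then show ?thesis unfolding pm_def by simp
  next
    case (Suc p')
    then have "\<not> pm xs i (p' + 1) \<le> ereal x"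
      using not_less_Least[of p' "\<lambda>p. pm xs i (p + 1) \<le> ereal x"] unfolding p_def by simp
    then show ?thesis using Suc by simp
  qed
  ultimately show ?thesis by blast
qed

lemma marks_around_successor_of_odd_part:
  assumes "sorted_wrt (\<ge>) xs" "gap3 xs" "odd y" "y \<in> set xs" "y + 1 \<in> set xs"
  shows "two_marked xs (y + 1)" "one_marked xs y"
    "y + 3 \<in> set xs \<Longrightarrow> one_marked xs (y + 3)" "count_list xs (y + 1) = 1"
proof -
  obtain k where k: "k < length xs" "xs ! k = y"
    using assms(4) by (auto simp: in_set_conv_nth)
  have index: "Suc i = k" if "i < length xs" "xs ! i = y + 1" for i
  proof -
    have "i < k"
      using sorted_desc_nth_less_imp_less[OF assms(1) k(1) that(1)] k(2) that(2) by simp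
    then show ?thesis
      using gap3_even_close_imp_Suc[OF assms(1,2) _ k(1)] k(2) that(2) assms(3) by simp
  qed
  obtain i where i: "i < length xs" "xs ! i = y + 1"
    using assms(5) by (auto simp: in_set_conv_nth)
  have marks: "gg xs ! k = 1" "gg xs ! i = 2"
    using gg_odd_below_successor[OF assms(1,2), of i] index[OF i] i(2) k assms(3) by auto
  show "two_marked xs (y + 1)"
    unfolding two_marked_def using i marks(2) by blast
  show "one_marked xs y"
    unfolding one_marked_def using k marks(1) by blast
  have "j = i" if "j < length xs" "xs ! j = y + 1" for j
    using index[OF that] index[OF i] by simp
  then show "count_list xs (y + 1) = 1"
    by (rule count_list_eq_1_if_unique_nth[OF i])
  show "one_marked xs (y + 3)" if "y + 3 \<in> set xs"
  proof -
    from that obtain h where h: "h < length xs" "xs ! h = y + 3" by (auto simp: in_set_conv_nth)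
    have "h < i"
      using sorted_desc_nth_less_imp_less[OF assms(1) i(1) h(1)] i(2) h(2) by simp
    then have "i = Suc h"
      using gap3_even_close_imp_Suc[OF assms(1,2) _ i(1)] i(2) h(2) assms(3) by simp
    then have "gg xs ! h = 1"
      using gg_nth[OF assms(1,2) h(1)] marks(2) by simp
    then show ?thesis
      unfolding one_marked_def using h by blast
  qed
qed

lemma two_marked_eq_P2:
  assumes "two_marked xs a"
  obtains q where "1 \<le> q" "q \<le> Nmark xs 2" "P2 xs q = a"
proof -
  have "a \<in> set (marked_parts xs 2)"
    using assms unfolding set_marked_parts_two by simp
  then obtain i where "i < Nmark xs 2" "marked_parts xs 2 ! i = a"
    unfolding Nmark_def by (auto simp: in_set_conv_nth)
  then show ?thesis
    using that[of "Suc i"] unfolding P2_def by simp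
qed

lemma has_2marked_of_type_iff_start_type:
  assumes "sorted_wrt (>) (marked_parts xs 2)" "1 \<le> q" "q \<le> Nmark xs 2" "P2 xs q = a"
  shows "has_2marked_of_type xs a s \<longleftrightarrow> start_type xs q = s"
proof
  assume "has_2marked_of_type xs a s"
  then obtain b where b: "1 \<le> b" "b \<le> Nmark xs 2" "P2 xs b = a" "start_type xs b = s"
    unfolding has_2marked_of_type_def by blast
  have "pm xs 2 b = pm xs 2 q"
    using pm_two_eq_P2[OF b(1,2)] pm_two_eq_P2[OF assms(2,3)] b(3) assms(4) by simp
  then have "b = q"
    using pm_inj[OF assms(1)] b(2) assms(3) by blast
  then show "start_type xs q = s"
    using b(4) by simp
next
  assume "start_type xs q = s"
  then show "has_2marked_of_type xs a s"
    unfolding has_2marked_of_type_def using assms(2-4) by blast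
qed

(* No odd part reaches a, so b \<le> l; Case 1 applies unless a + 2 is a 1-marked part other
   than \<sigma>_{b-1}, and then Case 3 applies. *)
lemma start_type_S0_or_S2:
  assumes "1 \<le> b" "b \<le> Nmark xs 2" "P2 xs b = a"
    and "\<forall>y\<in>set xs. odd y \<longrightarrow> y < a"
    and "one_marked xs (a - 1)" "a + 2 \<in> set xs \<Longrightarrow> one_marked xs (a + 2)"
  shows "start_type xs b = S0 \<or> start_type xs b = S2"
proof -
  have "b \<le> lval xs"
    unfolding lval_def
  proof (rule Greatest_le_nat)
    show "b \<le> Nmark xs 2 \<and> (\<forall>y\<in>set xs. odd y \<longrightarrow> ereal (real y) < pm xs 2 b)"
      using assms(1-4) pm_two_eq_P2[OF assms(1,2)] by auto
  qed auto
  moreover have "x \<in> set xs" if "one_marked xs x" for x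
    using that unfolding one_marked_def by auto
  moreover obtain b' where "b = Suc b'"
    using assms(1) by (cases b) auto
  ultimately show ?thesis
    using assms(3,5,6) unfolding start_type_def by (cases b') (auto simp: Let_def)
qed

lemma start_type_successor_of_largest_odd:
  assumes "sorted_wrt (\<ge>) xs" "gap3 xs" "odd y" "y \<in> set xs" "\<forall>z\<in>set xs. odd z \<longrightarrow> z \<le> y"
    and "1 \<le> b" "b \<le> Nmark xs 2" "P2 xs b = y + 1"
  shows "start_type xs b = S0 \<or> start_type xs b = S2"
proof -
  have "y + 1 \<in> set xs"
    using P2_in_set[OF assms(6,7)] assms(8) by simp
  note marks = marks_around_successor_of_odd_part[OF assms(1-4) this]
  show ?thesis
    by (rule start_type_S0_or_S2[OF assms(6-8)])
      (use assms(5) marks in \<open>auto simp: add.assoc numeral_3_eq_3\<close>)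
qed

lemma pm_bracket_index:
  assumes "sorted_wrt (>) (marked_parts xs i)"
    and "pm xs i (p + 1) \<le> ereal x" "ereal x < pm xs i p" "pm xs i q = ereal x"
  shows "q = p + 1"
proof (rule ccontr)
  assume "q \<noteq> p + 1"
  then consider "q \<le> p" | "p + 1 < q" "q \<le> Nmark xs i"
    using pm_eq_ereal_D[OF assms(4)] by linarith
  then show False
  proof cases
    case 1
    then show False using pm_antimono[OF assms(1) 1] assms(3,4) by simp
  next
    case 2
    then show False using pm_strict_antimono[OF assms(1) 2(1)] assms(2,4) by simp
  qed
qed

lemma inCeq_pt_exists_without_successor:
  assumes "is_partition xs" "inC 3 r xs"
    and "2 * t + 1 \<in> set xs" "\<forall>y\<in>set xs. odd y \<longrightarrow> y \<le> 2 * t + 1"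
    and "2 * t + 2 \<notin> set xs"
  shows "\<exists>p. inCeq_pt 3 r p t xs"
proof -
  obtain p where p: "pm xs 2 (p + 1) \<le> ereal (real (2 * t + 2))"
    "ereal (real (2 * t + 2)) < pm xs 2 p"
    using ex_pm_bracket by blast
  have "\<forall>j<length xs. gg xs ! j \<le> 2"
    using gg_nth_le_2[OF is_partition_sorted[OF assms(1)] inC_3_imp_gap3[OF assms(2)]] by blast
  moreover have "\<not> has_2marked_of_type xs (2 * t + 2) s" for s
    using P2_in_set[of _ xs] assms(5) unfolding has_2marked_of_type_def by force
  ultimately have "inCeq_pt 3 r p t xs"
    using assms p unfolding inCeq_pt_def by (simp add: less_imp_le)
  then show ?thesis ..
qed

lemma inCeq_pt_exists_with_successor:
  assumes "is_partition xs" "inC 3 r xs"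
    and "2 * t + 1 \<in> set xs" "\<forall>y\<in>set xs. odd y \<longrightarrow> y \<le> 2 * t + 1"
    and "2 * t + 2 \<in> set xs"
  shows "\<exists>p. inCeq_pt 3 r p t xs"
proof -
  have sorted: "sorted_wrt (\<ge>) xs" and gap: "gap3 xs"
    using is_partition_sorted[OF assms(1)] inC_3_imp_gap3[OF assms(2)] .
  have marks_le_2: "\<forall>j<length xs. gg xs ! j \<le> 2"
    using gg_nth_le_2[OF sorted gap] by blast
  note marks = marks_around_successor_of_odd_part[OF sorted gap _ assms(3)]
  have two_marked: "two_marked xs (2 * t + 2)" and once: "count_list xs (2 * t + 2) = 1"
    using marks assms(5) by simp_all
  obtain q where q: "1 \<le> q" "q \<le> Nmark xs 2" "P2 xs q = 2 * t + 2"
    using two_marked by (rule two_marked_eq_P2)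
  have decreasing: "sorted_wrt (>) (marked_parts xs 2)"
    using sorted gap by (rule sorted_marked_parts_two)
  have pm_q: "pm xs 2 q = ereal (real (2 * t + 2))"
    using pm_two_eq_P2[OF q(1,2)] q(3) by simp
  obtain p where p: "pm xs 2 (p + 1) \<le> ereal (real (2 * t + 2))"
    "ereal (real (2 * t + 2)) < pm xs 2 p"
    using ex_pm_bracket by blast
  have q_eq: "q = p + 1"
    using pm_bracket_index[OF decreasing p pm_q] .
  have type: "has_2marked_of_type xs (2 * t + 2) s \<longleftrightarrow> start_type xs q = s" for s
    using has_2marked_of_type_iff_start_type[OF decreasing q] .
  from start_type_successor_of_largest_odd[OF sorted gap _ assms(3,4) q(1,2)] q(3)
  consider "start_type xs q = S0" | "start_type xs q = S2"
    by fastforce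
  then show ?thesis
  proof cases
    case 1
    have "\<exists>i\<ge>1. i \<le> p + 1 \<and> pm xs 2 i = pm xs 2 (p + 1) + ereal (real (4 * (p + 1 - i))) \<and>
            (\<exists>x. pm xs 2 i = ereal (real x) \<and> count_list xs x = 1)"
      by (rule exI[of _ "p + 1"], intro conjI exI[of _ "2 * t + 2"]) (use pm_q q_eq once in simp_all)
    then have "inCeq_pt 3 r p t xs"
      unfolding inCeq_pt_def using assms p marks_le_2 two_marked type[of S2] 1 q_eq pm_q
      by (auto simp: less_imp_le)
    then show ?thesis ..
  next
    case 2
    have "pm xs 2 (q + 1) < pm xs 2 q"
      using pm_strict_antimono[OF decreasing, of q "q + 1"] q(2) by simp
    then have "inCeq_pt 3 r q t xs"
      unfolding inCeq_pt_def using assms marks_le_2 two_marked type[of S0] 2 pm_q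
      by (simp add: less_imp_le)
    then show ?thesis ..
  qed
qed

lemma inCeq_pt_exists:
  assumes "is_partition xs" "inC 3 r xs"
    and "2 * t + 1 \<in> set xs" "\<forall>y\<in>set xs. odd y \<longrightarrow> y \<le> 2 * t + 1"
  shows "\<exists>p. inCeq_pt 3 r p t xs"
  using inCeq_pt_exists_without_successor[OF assms] inCeq_pt_exists_with_successor[OF assms]
  by blast

lemma inCeq_pt_t_unique:
  assumes "inCeq_pt k r p t xs" "inCeq_pt k' r' p' t' xs"
  shows "t = t'"
proof -
  have "2 * t + 1 \<in> set xs" "\<forall>y\<in>set xs. odd y \<longrightarrow> y \<le> 2 * t + 1"
    "2 * t' + 1 \<in> set xs" "\<forall>y\<in>set xs. odd y \<longrightarrow> y \<le> 2 * t' + 1"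
    using assms unfolding inCeq_pt_def by blast+
  then have "2 * t + 1 \<le> 2 * t' + 1" "2 * t' + 1 \<le> 2 * t + 1"
    by auto
  then show ?thesis by simp
qed

lemma inCeq_pt_p_not_less:
  assumes "is_partition xs" "inCeq_pt 3 r p t xs" "inCeq_pt 3 r p' t xs" "p < p'"
  shows False
proof -
  let ?a = "ereal (real (2 * t + 2))"
  have sorted: "sorted_wrt (\<ge>) xs"
    using assms(1) by (rule is_partition_sorted)
  have gap: "gap3 xs"
    and largest_odd: "2 * t + 1 \<in> set xs" "\<forall>y\<in>set xs. odd y \<longrightarrow> y \<le> 2 * t + 1"
    using assms(2) inC_3_imp_gap3 unfolding inCeq_pt_def by blast+
  have decreasing: "sorted_wrt (>) (marked_parts xs 2)"
    using sorted gap by (rule sorted_marked_parts_two)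
  have "pm xs 2 (p + 1) \<le> ?a"
    and S2: "has_2marked_of_type xs (2 * t + 2) S2 \<Longrightarrow> pm xs 2 p = ?a"
    using assms(2) unfolding inCeq_pt_def by blast+
  moreover have "?a \<le> pm xs 2 p'"
    and S0: "has_2marked_of_type xs (2 * t + 2) S0 \<Longrightarrow> pm xs 2 (p' + 1) = ?a"
    using assms(3) unfolding inCeq_pt_def by blast+
  moreover have "pm xs 2 p' \<le> pm xs 2 (p + 1)"
    using pm_antimono[OF decreasing] assms(4) by simp
  ultimately have pm_p1: "pm xs 2 (p + 1) = ?a" and pm_p': "pm xs 2 p' = ?a"
    by (meson antisym order.trans)+
  have q: "1 \<le> p + 1" "p + 1 \<le> Nmark xs 2" and "p' \<le> Nmark xs 2"
    using pm_eq_ereal_D[OF pm_p1] pm_eq_ereal_D[OF pm_p'] by auto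
  then have "p' = p + 1"
    using pm_inj[OF decreasing, of p' "p + 1"] pm_p1 pm_p' by simp
  have P2_p1: "P2 xs (p + 1) = 2 * t + 1 + 1"
    using pm_two_eq_P2[OF q] pm_p1 by simp
  with start_type_successor_of_largest_odd[OF sorted gap _ largest_odd q]
  have "start_type xs (p + 1) = S0 \<or> start_type xs (p + 1) = S2"
    by simp
  then show False
  proof
    assume "start_type xs (p + 1) = S0"
    then have "pm xs 2 (p' + 1) = pm xs 2 p'"
      using S0 has_2marked_of_type_iff_start_type[OF decreasing q] P2_p1 pm_p' by simp
    moreover have "pm xs 2 (p' + 1) < pm xs 2 p'"
      using pm_strict_antimono[OF decreasing, of p' "p' + 1"] \<open>p' \<le> Nmark xs 2\<close> by simp
    ultimately show False by simp
  next
    assume "start_type xs (p + 1) = S2"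
    then have "pm xs 2 p = pm xs 2 (p + 1)"
      using S2 has_2marked_of_type_iff_start_type[OF decreasing q] P2_p1 pm_p1 by simp
    moreover have "pm xs 2 (p + 1) < pm xs 2 p"
      using pm_strict_antimono[OF decreasing, of p "p + 1"] q(2) by simp
    ultimately show False by simp
  qed
qed

lemma inCeq_pt_p_unique:
  assumes "is_partition xs" "inCeq_pt 3 r p t xs" "inCeq_pt 3 r p' t xs"
  shows "p = p'"
  using inCeq_pt_p_not_less[OF assms] inCeq_pt_p_not_less[OF assms(1,3,2)]
  by (meson linorder_neqE_nat)

lemma ex_largest_odd_part:
  fixes xs :: "nat list"
  assumes "\<exists>y\<in>set xs. odd y"
  obtains t where "2 * t + 1 \<in> set xs" "\<forall>y\<in>set xs. odd y \<longrightarrow> y \<le> 2 * t + 1"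
proof -
  define m where "m = Max {y \<in> set xs. odd y}"
  have "finite {y \<in> set xs. odd y}" "{y \<in> set xs. odd y} \<noteq> {}"
    using assms by auto
  then have "m \<in> {y \<in> set xs. odd y}" "\<forall>y\<in>set xs. odd y \<longrightarrow> y \<le> m"
    unfolding m_def by (rule Max_in, auto)
  then show ?thesis
    using that[of "m div 2"] by auto
qed

theorem theorem5p5:
  fixes \<pi> :: "nat list"
  assumes "is_partition \<pi>"
    and "inC 3 3 \<pi>"
    and "\<exists>y\<in>set \<pi>. odd y"
  shows "\<exists>!m::nat. inCeq 3 3 m \<pi>"
proof -
  obtain t where "2 * t + 1 \<in> set \<pi>" "\<forall>y\<in>set \<pi>. odd y \<longrightarrow> y \<le> 2 * t + 1"
    using assms(3) by (rule ex_largest_odd_part)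
  then obtain p where p: "inCeq_pt 3 3 p t \<pi>"
    using inCeq_pt_exists[OF assms(1,2)] by blast
  show ?thesis
  proof (rule ex1I[of _ "p + t"])
    show "inCeq 3 3 (p + t) \<pi>"
      unfolding inCeq_def using p by blast
  next
    fix m
    assume "inCeq 3 3 m \<pi>"
    then obtain p' t' where "m = p' + t'" "inCeq_pt 3 3 p' t' \<pi>"
      unfolding inCeq_def by blast
    moreover have "t' = t"
      using inCeq_pt_t_unique[OF p] \<open>inCeq_pt 3 3 p' t' \<pi>\<close> by simp
    ultimately show "m = p + t"
      using inCeq_pt_p_unique[OF assms(1) p] by simp
  qed
qed

end
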